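(* Let $M$ be the star matrix of a partition of the hypercube ${\bf Z}_q^n$ into subcubes all of the same dimension, let $T$ be a transfractal submatrix of $M$, let $t$ be a column of $M$ belonging to $T$ and let $s$ be a column of $M$ not belonging to $T$. Then either there is no row in which both $t$ and $s$ contain elements of ${\bf Z}_q$, or every row in which $t$ contains an element of ${\bf Z}_q$ also contains an element of ${\bf Z}_q$ in column $s$; and in the latter case there is a single $a\in{\bf Z}_q$ such that column $s$ contains $a$ in every row in which column $t$ contains an element of ${\bf Z}_q$.
   Context: A subcube of ${\bf Z}_q^n$ is obtained by fixing some coordinates and letting the others run through ${\bf Z}_q$; its dimension is the number of free coordinates, and its star pattern is the vector over ${\bf Z}_q\cup\{*\}$ with the fixed values in fixed coordinates and $*$ in free ones. The star matrix of a partition of ${\bf Z}_q^n$ into subcubes is the matrix whose rows are the star patterns of the subcubes. Fractal matrices: $M_{q,0}$ has one row and zero columns; for $m\ge1$, $M_{q,m}$ consists of $q$ horizontal blocks indexed by $a=0,\dots,q-1$, each with $q^{m-1}$ rows; its first column has entry $a$ in every row of block $a$; its remaining columns are divided into $q$ vertical stripes of width equal to the number of columns of $M_{q,m-1}$, and in block $a$ the $a$-th stripe is a copy of $M_{q,m-1}$ while other stripes of block $a$ are all $*$. A fractal matrix is any matrix obtained from some $M_{q,m}$ ($m\ge1$) by permuting rows and columns. A submatrix $T$ of $M$ (a set of rows and a set of columns, not necessarily consecutive) is a transfractal if $T$ is a fractal matrix and each column of $M$ used by $T$ contains only $*$ in all rows of $M$ not used by $T$. *)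

theory Defs
  imports Main
begin

text \<open>Points of Z_q^n are lists of length n with entries in {0..<q}.
  A star pattern is a list over nat option: Some a = fixed value a, None = star.\<close>

definition subcube :: "nat \<Rightarrow> nat option list \<Rightarrow> nat list set" where
  "subcube q p = {x. length x = length p \<and>
      (\<forall>i<length p. x ! i < q \<and> (\<forall>a. p ! i = Some a \<longrightarrow> x ! i = a))}"

definition hypercube :: "nat \<Rightarrow> nat \<Rightarrow> nat list set" where
  "hypercube q n = {x. length x = n \<and> (\<forall>i<n. x ! i < q)}"

definition star_pattern :: "nat \<Rightarrow> nat \<Rightarrow> nat option list \<Rightarrow> bool" where
  "star_pattern q n p \<longleftrightarrow> length p = n \<and> (\<forall>i<n. \<forall>a. p ! i = Some a \<longrightarrow> a < q)"

definition dim :: "nat option list \<Rightarrow> nat" where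
  "dim p = card {i. i < length p \<and> p ! i = None}"

text \<open>P is the set of star patterns (= set of rows of the star matrix) of a partition
  of Z_q^n into subcubes.\<close>
definition subcube_partition :: "nat \<Rightarrow> nat \<Rightarrow> nat option list set \<Rightarrow> bool" where
  "subcube_partition q n P \<longleftrightarrow>
     (\<forall>p\<in>P. star_pattern q n p) \<and>
     (\<forall>p\<in>P. \<forall>p'\<in>P. p \<noteq> p' \<longrightarrow> subcube q p \<inter> subcube q p' = {}) \<and>
     (\<Union>p\<in>P. subcube q p) = hypercube q n"

fun fcols :: "nat \<Rightarrow> nat \<Rightarrow> nat" where
  "fcols q 0 = 0"
| "fcols q (Suc m) = 1 + q * fcols q m"

text \<open>Entries of M_{q,m}: rows 0..<q^m (block a = rows a*q^(m-1) ..< (a+1)*q^(m-1)),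
  columns 0..<fcols q m; column 0 is the first column, stripe k occupies columns
  1 + k*fcols q (m-1) ..< 1 + (k+1)*fcols q (m-1).\<close>
fun fractal :: "nat \<Rightarrow> nat \<Rightarrow> nat \<Rightarrow> nat \<Rightarrow> nat option" where
  "fractal q 0 r c = None"
| "fractal q (Suc m) r c =
     (let a = r div q ^ m; r' = r mod q ^ m in
      if c = 0 then Some a
      else (let k = (c - 1) div fcols q m; j = (c - 1) mod fcols q m in
            if k = a then fractal q m r' j else None))"

definition is_fractal_submatrix ::
  "nat \<Rightarrow> ('r \<Rightarrow> 'c \<Rightarrow> nat option) \<Rightarrow> 'r set \<Rightarrow> 'c set \<Rightarrow> bool" where
  "is_fractal_submatrix q E S C \<longleftrightarrow>
     (\<exists>m \<ge> 1. \<exists>\<sigma> \<tau>. bij_betw \<sigma> {..<q ^ m} S \<and> bij_betw \<tau> {..<fcols q m} C \<and>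
        (\<forall>r < q ^ m. \<forall>c < fcols q m. E (\<sigma> r) (\<tau> c) = fractal q m r c))"

definition transfractal ::
  "nat \<Rightarrow> nat \<Rightarrow> nat option list set \<Rightarrow> nat option list set \<Rightarrow> nat set \<Rightarrow> bool" where
  "transfractal q n P S C \<longleftrightarrow>
     S \<subseteq> P \<and> C \<subseteq> {..<n} \<and>
     is_fractal_submatrix q (\<lambda>p j. p ! j) S C \<and>
     (\<forall>j\<in>C. \<forall>p\<in>P - S. p ! j = None)"

end

theory Submission
  imports Defs
begin

text \<open>Let \<open>p\<^sub>1, p\<^sub>2\<close> be rows of the transfractal and let column \<open>s \<notin> C\<close> carry the value \<open>a\<close>
  in \<open>p\<^sub>1\<close>. Take a point \<open>y\<close> of the subcube of \<open>p\<^sub>2\<close> and overwrite its coordinates in \<open>C\<close> by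
  the fixed entries of \<open>p\<^sub>1\<close>. The resulting point lies in some subcube \<open>p'\<close>. If \<open>p'\<close> were
  outside the transfractal, it would have stars on \<open>C\<close> and so would also contain \<open>y\<close>,
  contradicting disjointness from \<open>p\<^sub>2\<close>. Any two distinct rows of a fractal matrix have
  distinct fixed entries in a common column, so \<open>p' = p\<^sub>1\<close>, whence \<open>y ! s = a\<close>. As \<open>y\<close> was
  arbitrary and \<open>q \<ge> 2\<close>, column \<open>s\<close> of \<open>p\<^sub>2\<close> is fixed to \<open>a\<close>.\<close>

lemma fractal_rows_conflict:
  assumes "r < q ^ m" "r' < q ^ m" "r \<noteq> r'"
  shows "\<exists>c < fcols q m. \<exists>a b. fractal q m r c = Some a \<and> fractal q m r' c = Some b \<and> a \<noteq> b"
  using assms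
proof (induction m arbitrary: r r')
  case 0
  then show ?case by simp
next
  case (Suc m)
  have pos: "q ^ m > 0"
    using Suc.prems(1) by (cases q) auto
  show ?case
  proof (cases "r div q ^ m = r' div q ^ m")
    case False
    then show ?thesis by (auto simp: Let_def)
  next
    case same_block: True
    have "r mod q ^ m \<noteq> r' mod q ^ m"
      using same_block Suc.prems(3) by (metis div_mod_decomp)
    then obtain j a b where j: "j < fcols q m" "a \<noteq> b"
        "fractal q m (r mod q ^ m) j = Some a" "fractal q m (r' mod q ^ m) j = Some b"
      using Suc.IH pos by (meson mod_less_divisor)
    define k where "k = r div q ^ m"
    have "k < q"
      using Suc.prems(1) unfolding k_def by (simp add: less_mult_imp_div_less mult.commute)
    define c where "c = 1 + k * fcols q m + j"
    have c_stripe: "(c - 1) div fcols q m = k" "(c - 1) mod fcols q m = j"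
      using j(1) unfolding c_def by auto
    have "c < 1 + (k + 1) * fcols q m"
      using j(1) unfolding c_def by simp
    also have "\<dots> \<le> fcols q (Suc m)"
      using \<open>k < q\<close> by (simp add: mult_right_mono del: mult_Suc)
    finally have "c < fcols q (Suc m)" .
    moreover have "c \<noteq> 0" unfolding c_def by simp
    ultimately show ?thesis
      using j c_stripe same_block unfolding k_def by (intro exI[of _ c]) (auto simp: Let_def)
  qed
qed

lemma fractal_submatrix_rows_conflict:
  assumes "is_fractal_submatrix q E S C" "p \<in> S" "p' \<in> S" "p \<noteq> p'"
  shows "\<exists>c\<in>C. \<exists>a b. E p c = Some a \<and> E p' c = Some b \<and> a \<noteq> b"
proof -
  obtain m \<sigma> \<tau> where \<sigma>: "bij_betw \<sigma> {..<q ^ m} S" and \<tau>: "bij_betw \<tau> {..<fcols q m} C"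
    and entries: "\<forall>r < q ^ m. \<forall>c < fcols q m. E (\<sigma> r) (\<tau> c) = fractal q m r c"
    using assms(1) unfolding is_fractal_submatrix_def by blast
  obtain r r' where r: "r < q ^ m" "p = \<sigma> r" and r': "r' < q ^ m" "p' = \<sigma> r'"
    using \<sigma> assms(2,3) unfolding bij_betw_def by auto
  with assms(4) obtain c a b where "c < fcols q m" "a \<noteq> b"
      "fractal q m r c = Some a" "fractal q m r' c = Some b"
    using fractal_rows_conflict by blast
  moreover have "\<tau> c \<in> C"
    using \<tau> \<open>c < fcols q m\<close> unfolding bij_betw_def by auto
  ultimately show ?thesis
    using entries r r' by metis
qed

definition impose_fixed :: "nat option list \<Rightarrow> nat set \<Rightarrow> nat list \<Rightarrow> nat list" where
  "impose_fixed p C y =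
     map (\<lambda>i. if i \<in> C then (case p ! i of Some b \<Rightarrow> b | None \<Rightarrow> y ! i) else y ! i) [0..<length y]"

lemma length_impose_fixed [simp]: "length (impose_fixed p C y) = length y"
  by (simp add: impose_fixed_def)

lemma nth_impose_fixed:
  "i < length y \<Longrightarrow> impose_fixed p C y ! i =
     (if i \<in> C then (case p ! i of Some b \<Rightarrow> b | None \<Rightarrow> y ! i) else y ! i)"
  by (simp add: impose_fixed_def split: option.split)

lemma impose_fixed_in_hypercube:
  assumes "star_pattern q n p" "y \<in> hypercube q n"
  shows "impose_fixed p C y \<in> hypercube q n"
  using assms
  by (fastforce simp: hypercube_def star_pattern_def nth_impose_fixed split: option.split)

lemma impose_fixed_in_subcube:
  assumes "star_pattern q n p" "y \<in> hypercube q n"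
  shows "impose_fixed p UNIV y \<in> subcube q p"
  using assms
  by (fastforce simp: hypercube_def star_pattern_def subcube_def nth_impose_fixed split: option.split)

lemma subcube_in_hypercube: "star_pattern q n p \<Longrightarrow> subcube q p \<subseteq> hypercube q n"
  by (auto simp: subcube_def hypercube_def star_pattern_def)

lemma subcube_impose_fixed_stars:
  assumes "impose_fixed p C y \<in> subcube q p'" "\<forall>i\<in>C. p' ! i = None" "y \<in> hypercube q n"
  shows "y \<in> subcube q p'"
  using assms by (fastforce simp: subcube_def hypercube_def nth_impose_fixed)

lemma subcube_constant_coordinate_imp_fixed:
  assumes "2 \<le> q" "star_pattern q n p" "j < n" and const: "\<forall>y\<in>subcube q p. y ! j = a"
  shows "p ! j = Some a"
proof -
  define y where "y = impose_fixed p UNIV (replicate n (if a = 0 then 1 else 0))"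
  have "replicate n (if a = 0 then 1 else 0) \<in> hypercube q n"
    using assms(1) by (simp add: hypercube_def)
  then have "y ! j = a"
    using const impose_fixed_in_subcube[OF assms(2)] unfolding y_def by blast
  then show ?thesis
    using \<open>j < n\<close> by (auto simp: y_def nth_impose_fixed split: option.splits if_splits)
qed

lemma transfractal_subcube_coordinate:
  assumes part: "subcube_partition q n P" and tf: "transfractal q n P S C"
    and p\<^sub>1: "p\<^sub>1 \<in> S" and p\<^sub>2: "p\<^sub>2 \<in> S" and "j < n" "j \<notin> C" "p\<^sub>1 ! j = Some a"
    and y: "y \<in> subcube q p\<^sub>2"
  shows "y ! j = a"
proof -
  have "S \<subseteq> P" and C: "C \<subseteq> {..<n}" and stars: "\<forall>i\<in>C. \<forall>p\<in>P - S. p ! i = None"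
    and fractal: "is_fractal_submatrix q (\<lambda>p i. p ! i) S C"
    using tf unfolding transfractal_def by auto
  have pattern: "star_pattern q n p" if "p \<in> P" for p
    using part that unfolding subcube_partition_def by auto
  define z where "z = impose_fixed p\<^sub>1 C y"
  have "y \<in> hypercube q n"
    using y p\<^sub>2 \<open>S \<subseteq> P\<close> pattern subcube_in_hypercube by blast
  then have "z \<in> hypercube q n" and len_y: "length y = n"
    using impose_fixed_in_hypercube pattern p\<^sub>1 \<open>S \<subseteq> P\<close> unfolding z_def
    by (auto simp: hypercube_def)
  then obtain p' where p': "p' \<in> P" "z \<in> subcube q p'"
    using part unfolding subcube_partition_def by blast
  have len_p': "length p' = n"
    using pattern[OF p'(1)] by (simp add: star_pattern_def)
  have "p' \<in> S"
  proof (rule ccontr)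
    assume "p' \<notin> S"
    then have "y \<in> subcube q p'" and "p' \<noteq> p\<^sub>2"
      using subcube_impose_fixed_stars p' stars p\<^sub>2 \<open>y \<in> hypercube q n\<close>
      unfolding z_def by auto
    then show False
      using part y p' p\<^sub>2 \<open>S \<subseteq> P\<close> unfolding subcube_partition_def by blast
  qed
  have "p' = p\<^sub>1"
  proof (rule ccontr)
    assume "p' \<noteq> p\<^sub>1"
    then obtain c b b' where "c \<in> C" "p\<^sub>1 ! c = Some b" "p' ! c = Some b'" "b \<noteq> b'"
      using fractal_submatrix_rows_conflict[OF fractal p\<^sub>1 \<open>p' \<in> S\<close>] by auto
    moreover have "z ! c = b'"
      using p'(2) \<open>p' ! c = Some b'\<close> \<open>c \<in> C\<close> C len_p' by (auto simp: subcube_def)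
    ultimately show False
      using C len_y by (auto simp: z_def nth_impose_fixed)
  qed
  then have "z ! j = a"
    using p'(2) \<open>j < n\<close> \<open>p\<^sub>1 ! j = Some a\<close> len_p' by (auto simp: subcube_def)
  then show ?thesis
    using \<open>j < n\<close> \<open>j \<notin> C\<close> len_y by (simp add: z_def nth_impose_fixed)
qed

lemma transfractal_fixed_entry_uniform:
  assumes "2 \<le> q" "subcube_partition q n P" "transfractal q n P S C"
    and "p\<^sub>1 \<in> S" "p\<^sub>2 \<in> S" "j < n" "j \<notin> C" "p\<^sub>1 ! j = Some a"
  shows "p\<^sub>2 ! j = Some a"
proof (rule subcube_constant_coordinate_imp_fixed)
  show "star_pattern q n p\<^sub>2"
    using assms(2,3,5) unfolding subcube_partition_def transfractal_def by auto
qed (use assms transfractal_subcube_coordinate in auto)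

theorem corollary1:
  fixes q n :: nat and P S :: "nat option list set" and C :: "nat set" and t s :: nat
  assumes "2 \<le> q"
    and "subcube_partition q n P"
    and "\<exists>d. \<forall>p\<in>P. dim p = d"
    and "transfractal q n P S C"
    and "t \<in> C" and "s < n" and "s \<notin> C"
  shows "(\<not> (\<exists>p\<in>P. p ! t \<noteq> None \<and> p ! s \<noteq> None))
       \<or> ((\<forall>p\<in>P. p ! t \<noteq> None \<longrightarrow> p ! s \<noteq> None) \<and>
          (\<exists>a < q. \<forall>p\<in>P. p ! t \<noteq> None \<longrightarrow> p ! s = Some a))"
proof (cases "\<exists>p\<in>P. p ! t \<noteq> None \<and> p ! s \<noteq> None")
  case True
  then obtain p a where p: "p \<in> P" "p ! t \<noteq> None" "p ! s = Some a" by blast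
  have in_S: "p' \<in> S" if "p' \<in> P" "p' ! t \<noteq> None" for p'
    using assms(4,5) that unfolding transfractal_def by (metis DiffI)
  have "a < q"
    using assms(2,6) p unfolding subcube_partition_def star_pattern_def by blast
  moreover have "\<forall>p'\<in>P. p' ! t \<noteq> None \<longrightarrow> p' ! s = Some a"
    using transfractal_fixed_entry_uniform[OF assms(1,2,4) in_S[OF p(1,2)] _ assms(6,7) p(3)] in_S
    by blast
  ultimately show ?thesis by blast
qed blast

end
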